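(* Let $(\mathbb R/2\pi\mathbb Z)^3_{\rm reg}=\{(\alpha,\beta,\gamma)\in(\mathbb R/2\pi\mathbb Z)^3:\sin2\beta\neq0\}$. The map $$\Phi:(\mathbb R/2\pi\mathbb Z)^3_{\rm reg}\to\{a\in\mathcal A_2:|a|=1\}\setminus(\mathcal A_1e_2\cup\mathcal A_1),\qquad(\alpha,\beta,\gamma)\mapsto\exp(\alpha e_1)\exp(\beta e_1e_2)\exp(\gamma e_1)$$ is an eight-fold covering map.
   Context: $\mathcal A_2$ is the real associative algebra generated by $e_1,e_2$ with $e_1^2=e_2^2=-1$, $e_1e_2=-e_2e_1$, with Euclidean norm in the basis $1,e_1,e_2,e_1e_2$; $\exp x=\sum_{m\ge0}x^m/m!$. $\mathcal A_1=\mathbb R+\mathbb Re_1$, so $\mathcal A_1e_2=\mathbb Re_2+\mathbb Re_1e_2$. *)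

theory Defs
  imports "HOL-Analysis.Analysis"
begin

text \<open>The algebra A_2 modelled on real^4 with coordinates w.r.t. the basis
  1, e1, e2, e1e2 (indices 1,2,3,4); the norm of real^4 is the Euclidean norm
  in this basis.  The multiplication is the bilinear extension of the rules
  e1^2 = e2^2 = -1, e1 e2 = - e2 e1 (hence (e1e2)^2 = -1, etc.).\<close>

type_synonym A2 = "real^4"

definition A2_one :: A2 where "A2_one = vector [1, 0, 0, 0]"
definition A2_e1 :: A2 where "A2_e1 = vector [0, 1, 0, 0]"
definition A2_e2 :: A2 where "A2_e2 = vector [0, 0, 1, 0]"
definition A2_e12 :: A2 where "A2_e12 = vector [0, 0, 0, 1]"

definition A2_mult :: "A2 \<Rightarrow> A2 \<Rightarrow> A2" where
  "A2_mult x y = vector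
     [ x$1 * y$1 - x$2 * y$2 - x$3 * y$3 - x$4 * y$4,
       x$1 * y$2 + x$2 * y$1 + x$3 * y$4 - x$4 * y$3,
       x$1 * y$3 - x$2 * y$4 + x$3 * y$1 + x$4 * y$2,
       x$1 * y$4 + x$2 * y$3 - x$3 * y$2 + x$4 * y$1 ]"

fun A2_pow :: "A2 \<Rightarrow> nat \<Rightarrow> A2" where
  "A2_pow x 0 = A2_one"
| "A2_pow x (Suc m) = A2_mult x (A2_pow x m)"

definition A2_exp :: "A2 \<Rightarrow> A2" where
  "A2_exp x = (\<Sum>m. (1 / fact m) *\<^sub>R A2_pow x m)"

definition A1 :: "A2 set" where
  "A1 = {s *\<^sub>R A2_one + t *\<^sub>R A2_e1 | s t. True}"

definition A1e2 :: "A2 set" where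
  "A1e2 = {A2_mult a A2_e2 | a. a \<in> A1}"

text \<open>R/2piZ is represented by the unit circle in C via theta -> e^(i theta);
  the inverse (mod 2 pi) is Arg.\<close>
definition circle :: "complex set" where
  "circle = sphere 0 1"

definition torus_reg :: "(complex \<times> complex \<times> complex) set" where
  "torus_reg = {(u, v, w). u \<in> circle \<and> v \<in> circle \<and> w \<in> circle \<and> sin (2 * Arg v) \<noteq> 0}"

definition Phi :: "complex \<times> complex \<times> complex \<Rightarrow> A2" where
  "Phi = (\<lambda>(u, v, w). A2_mult (A2_mult (A2_exp (Arg u *\<^sub>R A2_e1))
                                          (A2_exp (Arg v *\<^sub>R A2_e12)))
                                 (A2_exp (Arg w *\<^sub>R A2_e1)))"

definition target :: "A2 set" where
  "target = {a. norm a = 1} - (A1e2 \<union> A1)"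

end

theory Submission
  imports Defs
begin

text \<open>
  Identify A2 with \<open>\<complex>\<^sup>2\<close> via \<open>x \<mapsto> (P, Q) = (x\<^sub>1 + i x\<^sub>2, x\<^sub>4 + i x\<^sub>3)\<close> and write the three
  angles as unit complex numbers \<open>u, v, w\<close>. Then \<open>\<Phi>(u, v, w) = (Re v \<cdot> u w, Im v \<cdot> cnj u \<cdot> w)\<close>,
  so \<open>|P| = |Re v|\<close>, \<open>|Q| = |Im v|\<close> and \<open>P Q = Re v \<cdot> Im v \<cdot> w\<^sup>2\<close>. A preimage of \<open>(P, Q)\<close> is
  therefore fixed by the sign of \<open>Re v\<close> and a square root \<open>w\<close> of \<open>\<plusminus>sgn (P Q)\<close> (four choices,
  which also fix the sign of \<open>Im v\<close>); \<open>u\<close> is then determined by \<open>P\<close>. On the neighbourhood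
  \<open>Re (P Q \<cdot> cnj (\<rho>\<^sup>2)) > 0\<close> of a point with \<open>sgn (P Q) = \<rho>\<^sup>2\<close> these eight choices are made
  continuously with the principal square root, giving eight disjoint open sheets, each mapped
  homeomorphically onto the neighbourhood.
\<close>

section \<open>Evenly covered sets given by local sections\<close>

definition sheeted_over ::
    "'a::topological_space set \<Rightarrow> ('a \<Rightarrow> 'b::topological_space) \<Rightarrow> 'b set \<Rightarrow> 'k set \<Rightarrow>
     ('k \<Rightarrow> 'a set) \<Rightarrow> ('k \<Rightarrow> 'b \<Rightarrow> 'a) \<Rightarrow> bool" where
  "sheeted_over C p T K V \<sigma> \<longleftrightarrow>
     C \<inter> p -` T = (\<Union>k\<in>K. V k) \<and> disjoint_family_on V K \<and>
     (\<forall>k\<in>K. openin (top_of_set C) (V k) \<and> continuous_on T (\<sigma> k) \<and> \<sigma> k ` T \<subseteq> V k \<and>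
            (\<forall>y\<in>T. p (\<sigma> k y) = y) \<and> (\<forall>z\<in>V k. \<sigma> k (p z) = z))"

lemma sheeted_overI:
  assumes "C \<inter> p -` T = (\<Union>k\<in>K. V k)" and "disjoint_family_on V K"
    and "\<And>k. k \<in> K \<Longrightarrow> openin (top_of_set C) (V k)"
    and "\<And>k. k \<in> K \<Longrightarrow> continuous_on T (\<sigma> k)"
    and "\<And>k y. k \<in> K \<Longrightarrow> y \<in> T \<Longrightarrow> \<sigma> k y \<in> V k \<and> p (\<sigma> k y) = y"
    and "\<And>k z. k \<in> K \<Longrightarrow> z \<in> V k \<Longrightarrow> \<sigma> k (p z) = z"
  shows "sheeted_over C p T K V \<sigma>"
  using assms unfolding sheeted_over_def by blast

lemma sheeted_over_homeomorphism:
  assumes "sheeted_over C p T K V \<sigma>" "continuous_on C p" "k \<in> K"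
  shows "homeomorphism (V k) T p (\<sigma> k)"
proof -
  have V: "V k \<subseteq> C" "p ` V k \<subseteq> T" "\<sigma> k ` T \<subseteq> V k" "\<forall>y\<in>T. p (\<sigma> k y) = y" "\<forall>z\<in>V k. \<sigma> k (p z) = z"
    using assms(1,3) unfolding sheeted_over_def by blast+
  show ?thesis
  proof (rule homeomorphismI)
    show "continuous_on (V k) p" using continuous_on_subset[OF assms(2) V(1)] .
    show "continuous_on T (\<sigma> k)" using assms(1,3) by (simp add: sheeted_over_def)
  qed (use V in auto)
qed

lemma covering_space_if_locally_sheeted:
  assumes cont: "continuous_on C p" and "p ` C \<subseteq> S" and "K \<noteq> {}"
    and local: "\<And>x. x \<in> S \<Longrightarrow> \<exists>T V \<sigma>. x \<in> T \<and> openin (top_of_set S) T \<and> sheeted_over C p T K V \<sigma>"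
  shows "covering_space C p S"
proof
  show "continuous_on C p" by (rule cont)
  have "x \<in> p ` C" if x: "x \<in> S" for x
  proof -
    obtain T V \<sigma> where "x \<in> T" and sh: "sheeted_over C p T K V \<sigma>"
      using local[OF x] by blast
    obtain k where "k \<in> K" using \<open>K \<noteq> {}\<close> by blast
    then have "\<sigma> k x \<in> C" "p (\<sigma> k x) = x"
      using sh \<open>x \<in> T\<close> unfolding sheeted_over_def by blast+
    then show ?thesis by force
  qed
  then show "p ` C = S" using \<open>p ` C \<subseteq> S\<close> by blast
next
  fix x assume "x \<in> S"
  then obtain T V \<sigma> where T: "x \<in> T" "openin (top_of_set S) T" and sh: "sheeted_over C p T K V \<sigma>"
    using local by blast
  have "\<Union> (V ` K) = C \<inter> p -` T" "disjoint (V ` K)" "\<forall>u \<in> V ` K. openin (top_of_set C) u"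
    using sh by (auto simp: sheeted_over_def disjoint_family_on_disjoint_image)
  moreover have "\<forall>u \<in> V ` K. \<exists>q. homeomorphism u T p q"
    using sheeted_over_homeomorphism[OF sh cont] by blast
  ultimately show "\<exists>T. x \<in> T \<and> openin (top_of_set S) T \<and>
      (\<exists>v. \<Union>v = C \<inter> p -` T \<and> (\<forall>u \<in> v. openin (top_of_set C) u) \<and>
           pairwise disjnt v \<and> (\<forall>u \<in> v. \<exists>q. homeomorphism u T p q))"
    using T by blast
qed

lemma card_fibre_if_sheeted:
  assumes sh: "sheeted_over C p T K V \<sigma>" and "y \<in> T"
  shows "card (C \<inter> p -` {y}) = card K"
proof -
  have "C \<inter> p -` {y} = (\<lambda>k. \<sigma> k y) ` K"
  proof
    show "C \<inter> p -` {y} \<subseteq> (\<lambda>k. \<sigma> k y) ` K"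
    proof
      fix z assume z: "z \<in> C \<inter> p -` {y}"
      then obtain k where "k \<in> K" "z \<in> V k"
        using sh \<open>y \<in> T\<close> unfolding sheeted_over_def by blast
      then have "\<sigma> k y = z" using sh z unfolding sheeted_over_def by auto
      with \<open>k \<in> K\<close> show "z \<in> (\<lambda>k. \<sigma> k y) ` K" by blast
    qed
    show "(\<lambda>k. \<sigma> k y) ` K \<subseteq> C \<inter> p -` {y}"
      using sh \<open>y \<in> T\<close> unfolding sheeted_over_def by blast
  qed
  moreover have "inj_on (\<lambda>k. \<sigma> k y) K"
  proof (rule inj_onI)
    fix k k' assume "k \<in> K" "k' \<in> K" "\<sigma> k y = \<sigma> k' y"
    then have "\<sigma> k y \<in> V k \<inter> V k'" using sh \<open>y \<in> T\<close> unfolding sheeted_over_def by blast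
    then show "k = k'"
      using sh \<open>k \<in> K\<close> \<open>k' \<in> K\<close> unfolding sheeted_over_def disjoint_family_on_def by blast
  qed
  ultimately show ?thesis by (simp add: card_image)
qed

section \<open>Unit complex numbers and quarter turns\<close>

lemma cnj_mult_self_of_norm_1: "cmod z = 1 \<Longrightarrow> cnj z * z = 1"
  using complex_norm_square[of z] by (simp add: mult.commute)

lemma cnj_of_norm_1:
  assumes "cmod z = 1"
  shows "cnj z = 1 / z"
proof -
  have "z \<noteq> 0" using assms by auto
  then show ?thesis using cnj_mult_self_of_norm_1[OF assms] by (simp add: field_simps)
qed

lemma of_real_norm_mult_sgn [simp]: "complex_of_real (cmod z) * sgn z = z"
  by (cases "z = 0") (simp_all add: sgn_div_norm scaleR_conv_of_real)

lemma cnj_sgn_mult_sgn: "z \<noteq> 0 \<Longrightarrow> cnj (sgn z) * sgn z = 1"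
  by (rule cnj_mult_self_of_norm_1) (simp add: norm_sgn)

lemma sgn_of_norm_1: "cmod z = 1 \<Longrightarrow> sgn z = z"
  by (simp add: sgn_div_norm)

lemma Re_sgn_mult_pos: "Re (z * c) > 0 \<Longrightarrow> Re (sgn z * c) > 0"
  by (cases "z = 0") (simp_all add: sgn_div_norm)

definition right_sector :: "complex set" where
  "right_sector = {y. \<bar>Im y\<bar> < Re y}"

definition quarter_turns :: "complex set" where
  "quarter_turns = {1, -1, \<i>, -\<i>}"

lemma quarter_turnsD:
  "\<eta> \<in> quarter_turns \<Longrightarrow> cmod \<eta> = 1 \<and> \<eta>\<^sup>2 = of_real (Re (\<eta>\<^sup>2)) \<and> Re (\<eta>\<^sup>2) \<in> {1, -1}"
  by (auto simp: quarter_turns_def power2_eq_square)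

lemma card_quarter_turns: "card quarter_turns = 4"
  by (simp add: quarter_turns_def complex_eq_iff)

lemma right_sector_square:
  assumes "y \<in> right_sector"
  shows "Re (y\<^sup>2) > 0" "csqrt (y\<^sup>2) = y"
proof -
  have "\<bar>Im y\<bar>\<^sup>2 < (Re y)\<^sup>2" using assms by (intro power_strict_mono) (auto simp: right_sector_def)
  then show "Re (y\<^sup>2) > 0" by (simp add: power2_eq_square)
  show "csqrt (y\<^sup>2) = y" using assms by (intro csqrt_square) (auto simp: right_sector_def)
qed

lemma csqrt_in_right_sector:
  assumes "Re a > 0"
  shows "csqrt a \<in> right_sector"
proof -
  define r where "r = csqrt a"
  have "r\<^sup>2 = a" by (simp add: r_def)
  then have "Re (r\<^sup>2) > 0" using assms by simp
  then have "\<bar>Im r\<bar>\<^sup>2 < (Re r)\<^sup>2" by (simp add: power2_eq_square)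
  moreover have "0 \<le> Re r" by (simp only: r_def Re_csqrt)
  ultimately have "\<bar>Im r\<bar> < Re r" by (rule power2_less_imp_less)
  then show ?thesis unfolding r_def[symmetric] right_sector_def by simp
qed

lemma right_sector_divide_simps:
  "y / 1 \<in> right_sector \<longleftrightarrow> \<bar>Im y\<bar> < Re y"
  "y / -1 \<in> right_sector \<longleftrightarrow> \<bar>Im y\<bar> < - Re y"
  "y / \<i> \<in> right_sector \<longleftrightarrow> \<bar>Re y\<bar> < Im y"
  "y / -\<i> \<in> right_sector \<longleftrightarrow> \<bar>Re y\<bar> < - Im y"
  by (simp_all add: right_sector_def divide_i)

lemma quarter_turn_to_right_sector_unique:
  assumes "\<eta> \<in> quarter_turns" "\<eta>' \<in> quarter_turns" "y / \<eta> \<in> right_sector" "y / \<eta>' \<in> right_sector"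
  shows "\<eta> = \<eta>'"
  using assms unfolding quarter_turns_def
  by (elim insertE emptyE; hypsubst; simp only: right_sector_divide_simps; linarith)

lemma quarter_turn_to_right_sector_exists:
  assumes "Re (y\<^sup>2) \<noteq> 0"
  obtains \<eta> where "\<eta> \<in> quarter_turns" "y / \<eta> \<in> right_sector"
proof -
  have "(Re y)\<^sup>2 \<noteq> (Im y)\<^sup>2" using assms by (simp add: power2_eq_square)
  then have "\<bar>Re y\<bar> \<noteq> \<bar>Im y\<bar>" by (metis power2_abs)
  then consider "\<bar>Im y\<bar> < Re y" | "\<bar>Im y\<bar> < - Re y" | "\<bar>Re y\<bar> < Im y" | "\<bar>Re y\<bar> < - Im y"
    by linarith
  then show ?thesis
    using that unfolding quarter_turns_def
    by cases (simp_all only: right_sector_divide_simps[symmetric]; blast)+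
qed

section \<open>The algebra A2 in complex coordinates\<close>

lemma vector_4 [simp]:
  "(vector [a, b, c, d] :: 'a::zero^4) $ 1 = a" "(vector [a, b, c, d] :: 'a::zero^4) $ 2 = b"
  "(vector [a, b, c, d] :: 'a::zero^4) $ 3 = c" "(vector [a, b, c, d] :: 'a::zero^4) $ 4 = d"
  unfolding vector_def by simp_all

lemma A2_mult_scaleR_left: "A2_mult (t *\<^sub>R x) z = t *\<^sub>R A2_mult x z"
  and A2_mult_add_right: "A2_mult x (y + z) = A2_mult x y + A2_mult x z"
  and A2_mult_scaleR_right: "A2_mult x (t *\<^sub>R z) = t *\<^sub>R A2_mult x z"
  and A2_mult_one_right: "A2_mult x A2_one = x"
  by (simp_all add: A2_mult_def A2_one_def vec_eq_iff forall_4 algebra_simps)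

definition A2_embed :: "A2 \<Rightarrow> complex \<Rightarrow> A2" where
  "A2_embed j z = Re z *\<^sub>R A2_one + Im z *\<^sub>R j"

lemma bounded_linear_A2_embed: "bounded_linear (A2_embed j)"
  unfolding A2_embed_def
  by (intro bounded_linear_add bounded_linear_compose[OF bounded_linear_scaleR_left]
      bounded_linear_Re bounded_linear_Im)

lemma A2_pow_scaleR_sqrt_minus_one:
  assumes j: "A2_mult j j = - A2_one"
  shows "A2_pow (t *\<^sub>R j) m = A2_embed j ((\<i> * of_real t) ^ m)"
proof (induction m)
  case 0
  show ?case by (simp add: A2_embed_def)
next
  case (Suc m)
  then show ?case
    by (simp add: A2_embed_def A2_mult_add_right A2_mult_scaleR_left A2_mult_scaleR_right
        A2_mult_one_right j algebra_simps)
qed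

lemma A2_exp_scaleR_sqrt_minus_one:
  assumes "A2_mult j j = - A2_one"
  shows "A2_exp (t *\<^sub>R j) = cos t *\<^sub>R A2_one + sin t *\<^sub>R j"
proof -
  have "(\<lambda>m. A2_embed j ((\<i> * of_real t) ^ m /\<^sub>R fact m)) sums A2_embed j (exp (\<i> * of_real t))"
    by (rule bounded_linear.sums[OF bounded_linear_A2_embed exp_converges])
  moreover have "A2_embed j ((\<i> * of_real t) ^ m /\<^sub>R fact m) = (1 / fact m) *\<^sub>R A2_pow (t *\<^sub>R j) m" for m
    by (simp add: A2_pow_scaleR_sqrt_minus_one[OF assms] divide_inverse_commute
        linear_scale[OF bounded_linear.linear[OF bounded_linear_A2_embed]])
  ultimately show ?thesis
    by (simp add: A2_exp_def sums_iff A2_embed_def exp_Euler cos_of_real sin_of_real mult.commute)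
qed

definition A2_of_coords :: "complex \<Rightarrow> complex \<Rightarrow> A2" where
  "A2_of_coords p q = vector [Re p, Im p, Im q, Re q]"

lemma Phi_on_circles:
  fixes u v w :: complex
  assumes "cmod u = 1" "cmod v = 1" "cmod w = 1"
  shows "Phi (u, v, w) = A2_of_coords (Re v * (u * w)) (Im v * (cnj u * w))"
proof -
  have "cos (Arg z) = Re z \<and> sin (Arg z) = Im z" if "cmod z = 1" for z
  proof -
    have "z \<noteq> 0" using that by auto
    then show ?thesis using cis_Arg[of z] that by (auto simp: sgn_div_norm complex_eq_iff)
  qed
  moreover have "A2_mult A2_e1 A2_e1 = - A2_one" "A2_mult A2_e12 A2_e12 = - A2_one"
    by (simp_all add: A2_mult_def A2_one_def A2_e1_def A2_e12_def vec_eq_iff forall_4)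
  ultimately show ?thesis
    using assms
    by (simp add: Phi_def A2_exp_scaleR_sqrt_minus_one A2_of_coords_def A2_mult_def A2_one_def
        A2_e1_def A2_e12_def vec_eq_iff forall_4 algebra_simps)
qed

definition A2_P :: "A2 \<Rightarrow> complex" where "A2_P x = Complex (x $ 1) (x $ 2)"
definition A2_Q :: "A2 \<Rightarrow> complex" where "A2_Q x = Complex (x $ 4) (x $ 3)"

lemma A2_P_of_coords [simp]: "A2_P (A2_of_coords p q) = p"
  and A2_Q_of_coords [simp]: "A2_Q (A2_of_coords p q) = q"
  by (simp_all add: A2_P_def A2_Q_def A2_of_coords_def complex_eq_iff)

lemma A2_of_coords_P_Q [simp]: "A2_of_coords (A2_P x) (A2_Q x) = x"
  by (simp add: A2_P_def A2_Q_def A2_of_coords_def vec_eq_iff forall_4)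

lemma continuous_on_A2_P [continuous_intros]: "continuous_on S f \<Longrightarrow> continuous_on S (\<lambda>x. A2_P (f x))"
  and continuous_on_A2_Q [continuous_intros]: "continuous_on S f \<Longrightarrow> continuous_on S (\<lambda>x. A2_Q (f x))"
  unfolding A2_P_def A2_Q_def Complex_eq by (intro continuous_intros; assumption)+

lemma continuous_on_A2_of_coords [continuous_intros]:
  assumes "continuous_on S f" "continuous_on S g"
  shows "continuous_on S (\<lambda>x. A2_of_coords (f x) (g x))"
proof -
  have "A2_of_coords p q = Re p *\<^sub>R axis 1 1 + Im p *\<^sub>R axis 2 1 + Im q *\<^sub>R axis 3 1 + Re q *\<^sub>R axis 4 1" for p q
    by (simp add: A2_of_coords_def vec_eq_iff forall_4 axis_def)
  then show ?thesis using assms by (simp only:) (intro continuous_intros)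
qed

lemma A2_in_target_iff:
  "x \<in> target \<longleftrightarrow> cmod (A2_P x) ^ 2 + cmod (A2_Q x) ^ 2 = 1 \<and> A2_P x \<noteq> 0 \<and> A2_Q x \<noteq> 0"
proof -
  have "norm x = 1 \<longleftrightarrow> cmod (A2_P x) ^ 2 + cmod (A2_Q x) ^ 2 = 1"
    by (simp add: norm_vec_def L2_set_def sum_4 cmod_power2 A2_P_def A2_Q_def algebra_simps)
  moreover have "x \<in> A1 \<longleftrightarrow> A2_Q x = 0"
  proof
    assume "A2_Q x = 0"
    then have "x = x $ 1 *\<^sub>R A2_one + x $ 2 *\<^sub>R A2_e1"
      by (auto simp: A2_Q_def A2_one_def A2_e1_def vec_eq_iff forall_4 complex_eq_iff)
    then show "x \<in> A1" unfolding A1_def by blast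
  qed (auto simp: A1_def A2_Q_def A2_one_def A2_e1_def complex_eq_iff)
  moreover have "x \<in> A1e2 \<longleftrightarrow> A2_P x = 0"
  proof
    assume "A2_P x = 0"
    then have "x = A2_mult (x $ 3 *\<^sub>R A2_one + x $ 4 *\<^sub>R A2_e1) A2_e2"
      by (auto simp: A2_P_def A2_one_def A2_e1_def A2_e2_def A2_mult_def vec_eq_iff forall_4 complex_eq_iff)
    then show "x \<in> A1e2" unfolding A1e2_def A1_def by blast
  qed (auto simp: A1e2_def A1_def A2_P_def A2_one_def A2_e1_def A2_e2_def A2_mult_def complex_eq_iff)
  ultimately show ?thesis unfolding target_def by auto
qed

lemma torus_reg_iff:
  "(u, v, w) \<in> torus_reg \<longleftrightarrow> cmod u = 1 \<and> cmod v = 1 \<and> cmod w = 1 \<and> Re v * Im v \<noteq> 0"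
proof -
  have "sin (2 * Arg v) = 2 * Re v * Im v" if "cmod v = 1"
  proof -
    have "v \<noteq> 0" using that by auto
    then show ?thesis
      using cis_Arg[of v] that by (auto simp: sin_double sgn_div_norm complex_eq_iff)
  qed
  then show ?thesis by (auto simp: torus_reg_def circle_def)
qed

lemma Phi_torus_reg:
  fixes u v w :: complex
  assumes "(u, v, w) \<in> torus_reg"
  shows "A2_P (Phi (u, v, w)) = Re v * (u * w)" "A2_Q (Phi (u, v, w)) = Im v * (cnj u * w)"
  using assms by (simp_all add: torus_reg_iff Phi_on_circles)

lemma Phi_in_target: "z \<in> torus_reg \<Longrightarrow> Phi z \<in> target"
proof (cases z)
  case (fields u v w)
  assume z: "z \<in> torus_reg"
  then have "cmod u = 1" "cmod w = 1" "Re v * Im v \<noteq> 0" "Re v ^ 2 + Im v ^ 2 = 1"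
    using cmod_power2[of v] by (auto simp: fields torus_reg_iff)
  then show ?thesis
    using Phi_torus_reg[OF z[unfolded fields]]
    by (auto simp: fields A2_in_target_iff norm_mult power_mult_distrib)
qed

lemma continuous_on_Phi: "continuous_on torus_reg Phi"
proof -
  have "continuous_on torus_reg
          (\<lambda>z. A2_of_coords (Re (fst (snd z)) * (fst z * snd (snd z)))
                             (Im (fst (snd z)) * (cnj (fst z) * snd (snd z))))"
    by (intro continuous_intros)
  then show ?thesis
    by (rule continuous_on_cong[THEN iffD1, OF refl, rotated])
      (auto simp: torus_reg_iff Phi_on_circles)
qed

section \<open>The sheets of \<open>Phi\<close>\<close>

definition PQ_halfplane :: "complex \<Rightarrow> A2 set" where
  "PQ_halfplane \<zeta> = {x. Re (A2_P x * A2_Q x * cnj \<zeta>) > 0}"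

lemma open_PQ_halfplane: "open (PQ_halfplane \<zeta>)"
  unfolding PQ_halfplane_def by (intro open_Collect_less continuous_intros)

text \<open>The local inverse labelled by the sign \<open>\<epsilon>\<close> of \<open>Re v\<close> and the quarter turn \<open>\<eta>\<close> that
  brings \<open>w / \<rho>\<close> into the right sector; \<open>Re (\<eta>\<^sup>2) = \<plusminus>1\<close> supplies the sign of \<open>Im v\<close>.\<close>

definition sheet_section :: "complex \<Rightarrow> real \<Rightarrow> complex \<Rightarrow> A2 \<Rightarrow> complex \<times> complex \<times> complex" where
  "sheet_section \<rho> \<epsilon> \<eta> x =
     (let p = A2_P x; q = A2_Q x; w = \<eta> * \<rho> * csqrt (sgn (p * q) * cnj (\<rho>\<^sup>2))
      in (\<epsilon> * sgn p * cnj w, Complex (\<epsilon> * cmod p) (\<epsilon> * Re (\<eta>\<^sup>2) * cmod q), w))"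

definition sheet :: "complex \<Rightarrow> real \<Rightarrow> complex \<Rightarrow> (complex \<times> complex \<times> complex) set" where
  "sheet \<rho> \<epsilon> \<eta> = {(u, v, w). (u, v, w) \<in> torus_reg \<and> Phi (u, v, w) \<in> PQ_halfplane (\<rho>\<^sup>2) \<and>
                               \<epsilon> * Re v > 0 \<and> w / (\<eta> * \<rho>) \<in> right_sector}"

lemma sheetD: "z \<in> sheet \<rho> \<epsilon> \<eta> \<Longrightarrow> z \<in> torus_reg \<and> Phi z \<in> PQ_halfplane (\<rho>\<^sup>2)"
  by (cases z) (simp add: sheet_def)

definition sheet_indices :: "(real \<times> complex) set" where
  "sheet_indices = {1, -1} \<times> quarter_turns"

lemma card_sheet_indices: "card sheet_indices = 8"
  by (simp add: sheet_indices_def card_cartesian_product card_quarter_turns)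

lemma section_recovers_coords:
  fixes p q w :: complex and \<epsilon> e :: real
  assumes \<epsilon>: "\<epsilon> \<in> {1, -1}" and e: "e \<in> {1, -1}" and w: "cmod w = 1" "w\<^sup>2 = e * sgn (p * q)"
    and "p \<noteq> 0"
  defines "u \<equiv> \<epsilon> * sgn p * cnj w" and "v \<equiv> Complex (\<epsilon> * cmod p) (\<epsilon> * e * cmod q)"
  shows "cmod u = 1" "Re v * (u * w) = p" "Im v * (cnj u * w) = q"
proof -
  have sq: "\<epsilon> * \<epsilon> = 1" "e * e = 1" using \<epsilon> e by auto
  show "cmod u = 1" using \<epsilon> \<open>p \<noteq> 0\<close> w by (auto simp: u_def norm_mult norm_sgn)
  have "u * w = \<epsilon> * sgn p" using cnj_mult_self_of_norm_1[OF w(1)] by (simp add: u_def mult.assoc)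
  then have "Re v * (u * w) = of_real (\<epsilon> * \<epsilon>) * (of_real (cmod p) * sgn p)"
    by (simp add: v_def algebra_simps)
  then show "Re v * (u * w) = p" by (simp add: sq)
  have "cnj u * w = \<epsilon> * e * (cnj (sgn p) * sgn p) * sgn q"
    by (simp add: u_def mult.assoc power2_eq_square[symmetric] w(2) sgn_mult)
  then have "Im v * (cnj u * w) = of_real (\<epsilon> * \<epsilon> * (e * e)) * (of_real (cmod q) * sgn q)"
    using cnj_sgn_mult_sgn[OF \<open>p \<noteq> 0\<close>] by (simp add: v_def algebra_simps)
  then show "Im v * (cnj u * w) = q" by (simp add: sq)
qed

lemma section_root_in_sector:
  fixes p q \<rho> \<eta> :: complex
  assumes \<rho>: "cmod \<rho> = 1" and \<eta>: "cmod \<eta> = 1" and pq: "Re (p * q * cnj (\<rho>\<^sup>2)) > 0"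
  defines "w \<equiv> \<eta> * \<rho> * csqrt (sgn (p * q) * cnj (\<rho>\<^sup>2))"
  shows "cmod w = 1" "w / (\<eta> * \<rho>) \<in> right_sector" "w\<^sup>2 = \<eta>\<^sup>2 * sgn (p * q)"
proof -
  define a where "a = sgn (p * q) * cnj (\<rho>\<^sup>2)"
  have w: "w = \<eta> * \<rho> * csqrt a" by (simp only: w_def a_def)
  have "p * q \<noteq> 0" using pq by auto
  then have "cmod a = 1" by (simp add: a_def norm_mult norm_sgn \<rho> norm_power)
  have "a = (p * q * cnj (\<rho>\<^sup>2)) /\<^sub>R cmod (p * q)"
    by (simp add: a_def sgn_div_norm)
  then have "Re a > 0" using pq \<open>p * q \<noteq> 0\<close> by simp
  then show "w / (\<eta> * \<rho>) \<in> right_sector"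
    using \<rho> \<eta> csqrt_in_right_sector by (auto simp: w)
  have "cmod (csqrt a) ^ 2 = 1" using \<open>cmod a = 1\<close> by (simp flip: norm_power)
  then have "cmod (csqrt a) = 1" by (simp add: power2_eq_1_iff)
  then show "cmod w = 1" by (simp add: w norm_mult \<rho> \<eta>)
  have "w\<^sup>2 = \<eta>\<^sup>2 * sgn (p * q) * (\<rho>\<^sup>2 * cnj (\<rho>\<^sup>2))"
    by (simp add: w power_mult_distrib a_def algebra_simps)
  also have "\<rho>\<^sup>2 * cnj (\<rho>\<^sup>2) = 1"
    using cnj_mult_self_of_norm_1[of "\<rho>\<^sup>2"] \<rho> by (simp add: norm_power mult.commute)
  finally show "w\<^sup>2 = \<eta>\<^sup>2 * sgn (p * q)" by simp
qed

lemma sheet_section_right_inverse: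
  assumes \<rho>: "cmod \<rho> = 1" and \<epsilon>: "\<epsilon> \<in> {1, -1}" and \<eta>: "\<eta> \<in> quarter_turns"
    and x: "x \<in> target \<inter> PQ_halfplane (\<rho>\<^sup>2)"
  shows "sheet_section \<rho> \<epsilon> \<eta> x \<in> sheet \<rho> \<epsilon> \<eta>" "Phi (sheet_section \<rho> \<epsilon> \<eta> x) = x"
proof -
  define p where "p = A2_P x"
  define q where "q = A2_Q x"
  define e where "e = Re (\<eta>\<^sup>2)"
  define w where "w = \<eta> * \<rho> * csqrt (sgn (p * q) * cnj (\<rho>\<^sup>2))"
  define u where "u = \<epsilon> * sgn p * cnj w"
  define v where "v = Complex (\<epsilon> * cmod p) (\<epsilon> * e * cmod q)"
  have section_eq: "sheet_section \<rho> \<epsilon> \<eta> x = (u, v, w)"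
    by (simp add: sheet_section_def Let_def p_def q_def e_def w_def u_def v_def)
  have pq: "(cmod p)\<^sup>2 + (cmod q)\<^sup>2 = 1" "p \<noteq> 0" "q \<noteq> 0" "Re (p * q * cnj (\<rho>\<^sup>2)) > 0"
    using x by (auto simp: p_def q_def A2_in_target_iff PQ_halfplane_def)
  have e: "e \<in> {1, -1}" "cmod \<eta> = 1" "\<eta>\<^sup>2 = e"
    using quarter_turnsD[OF \<eta>] by (auto simp: e_def)
  note root = section_root_in_sector[OF \<rho> e(2) pq(4), folded w_def]
  have "w\<^sup>2 = e * sgn (p * q)" using root(3) e(3) by simp
  note coords = section_recovers_coords[OF \<epsilon> e(1) root(1) this pq(2), folded u_def v_def]
  have sq: "\<epsilon>\<^sup>2 = 1" "e\<^sup>2 = 1" using \<epsilon> e(1) by auto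
  have "(cmod v)\<^sup>2 = 1" using pq(1) by (simp add: v_def cmod_power2 power_mult_distrib sq)
  then have "cmod v = 1" using abs_square_eq_1[of "cmod v"] by simp
  moreover have "Re v * Im v \<noteq> 0" "\<epsilon> * Re v > 0"
    using pq(2,3) \<epsilon> e(1) by (auto simp: v_def)
  ultimately have torus: "(u, v, w) \<in> torus_reg"
    using coords(1) root(1) by (simp add: torus_reg_iff)
  have "Phi (u, v, w) = x"
    using coords root(1) \<open>cmod v = 1\<close> by (simp add: Phi_on_circles p_def q_def)
  then show "Phi (sheet_section \<rho> \<epsilon> \<eta> x) = x" "sheet_section \<rho> \<epsilon> \<eta> x \<in> sheet \<rho> \<epsilon> \<eta>"
    using torus x \<open>\<epsilon> * Re v > 0\<close> root(2) by (simp_all add: section_eq sheet_def)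
qed

lemma sgn_Phi_coords_product:
  fixes u v w :: complex
  assumes "cmod u = 1" "cmod w = 1"
  shows "sgn ((Re v * (u * w)) * (Im v * (cnj u * w))) = sgn (Re v * Im v) * w\<^sup>2"
proof -
  have "(Re v * (u * w)) * (Im v * (cnj u * w)) = of_real (Re v * Im v) * (cnj u * u) * w\<^sup>2"
    by (simp add: power2_eq_square algebra_simps)
  also have "\<dots> = of_real (Re v * Im v) * w\<^sup>2"
    using cnj_mult_self_of_norm_1[OF assms(1)] by simp
  finally have eq: "(Re v * (u * w)) * (Im v * (cnj u * w)) = of_real (Re v * Im v) * w\<^sup>2" .
  have "cmod (w\<^sup>2) = 1" using assms(2) by (simp add: norm_power)
  then show ?thesis by (simp only: eq sgn_mult sgn_of_real sgn_of_norm_1)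
qed

lemma sheet_sign_and_root:
  fixes u v w :: complex
  assumes \<rho>: "cmod \<rho> = 1" and \<eta>: "\<eta> \<in> quarter_turns" and z: "(u, v, w) \<in> sheet \<rho> \<epsilon> \<eta>"
  defines "p \<equiv> Re v * (u * w)" and "q \<equiv> Im v * (cnj u * w)"
  shows "sgn (Re v * Im v) = Re (\<eta>\<^sup>2)" "\<eta> * \<rho> * csqrt (sgn (p * q) * cnj (\<rho>\<^sup>2)) = w"
proof -
  have torus: "cmod u = 1" "cmod w = 1" "Re v * Im v \<noteq> 0"
    using z by (auto simp: sheet_def torus_reg_iff)
  define s where "s = sgn (Re v * Im v)"
  define e where "e = Re (\<eta>\<^sup>2)"
  define y where "y = w / (\<eta> * \<rho>)"
  have e: "e \<in> {1, -1}" "cmod \<eta> = 1" "\<eta>\<^sup>2 = e" using quarter_turnsD[OF \<eta>] by (auto simp: e_def)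
  have s: "s \<in> {1, -1}" using torus(3) by (auto simp: s_def sgn_real_def)
  have "y \<in> right_sector" using z by (simp add: sheet_def y_def)
  have "\<rho>\<^sup>2 * cnj (\<rho>\<^sup>2) = 1"
    using cnj_mult_self_of_norm_1[of "\<rho>\<^sup>2"] \<rho> by (simp add: norm_power mult.commute)
  moreover have "w = \<eta> * \<rho> * y" using \<rho> e(2) by (auto simp: y_def)
  then have "w\<^sup>2 = e * \<rho>\<^sup>2 * y\<^sup>2" by (simp add: power_mult_distrib e(3))
  moreover have "sgn (p * q) = s * w\<^sup>2"
    unfolding p_def q_def s_def by (rule sgn_Phi_coords_product[OF torus(1,2)])
  ultimately have a: "sgn (p * q) * cnj (\<rho>\<^sup>2) = (s * e) * y\<^sup>2"
    by (simp add: algebra_simps)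
  have "(u, v, w) \<in> torus_reg" "Phi (u, v, w) \<in> PQ_halfplane (\<rho>\<^sup>2)" using z by (simp_all add: sheet_def)
  moreover from this(1) have "A2_P (Phi (u, v, w)) = p" "A2_Q (Phi (u, v, w)) = q"
    by (simp_all add: Phi_torus_reg p_def q_def)
  ultimately have "Re (p * q * cnj (\<rho>\<^sup>2)) > 0" by (simp add: PQ_halfplane_def)
  then have "Re (sgn (p * q) * cnj (\<rho>\<^sup>2)) > 0" by (rule Re_sgn_mult_pos)
  then have "(s * e) * Re (y\<^sup>2) > 0" unfolding a by simp
  then have "s * e > 0" using right_sector_square(1)[OF \<open>y \<in> right_sector\<close>] by (simp add: zero_less_mult_iff)
  then have "s = e" using s e(1) by auto
  then show "sgn (Re v * Im v) = Re (\<eta>\<^sup>2)" by (simp add: s_def e_def)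
  have "s * e = 1" using \<open>s = e\<close> e(1) by auto
  then have "csqrt (sgn (p * q) * cnj (\<rho>\<^sup>2)) = y"
    using a right_sector_square(2)[OF \<open>y \<in> right_sector\<close>] by simp
  then show "\<eta> * \<rho> * csqrt (sgn (p * q) * cnj (\<rho>\<^sup>2)) = w" using \<rho> e(2) by (auto simp: y_def)
qed

lemma sheet_section_left_inverse:
  assumes \<rho>: "cmod \<rho> = 1" and \<epsilon>: "\<epsilon> \<in> {1, -1}" and \<eta>: "\<eta> \<in> quarter_turns"
    and z: "z \<in> sheet \<rho> \<epsilon> \<eta>"
  shows "sheet_section \<rho> \<epsilon> \<eta> (Phi z) = z"
proof (cases z)
  case (fields u v w)
  have z': "(u, v, w) \<in> sheet \<rho> \<epsilon> \<eta>" using z fields by simp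
  then have torus: "(u, v, w) \<in> torus_reg" "cmod u = 1" "cmod w = 1" "\<epsilon> * Re v > 0" "Im v \<noteq> 0"
    by (auto simp: sheet_def torus_reg_iff)
  define p where "p = Re v * (u * w)"
  define q where "q = Im v * (cnj u * w)"
  note sign = sheet_sign_and_root[OF \<rho> \<eta> z', folded p_def q_def]
  have \<epsilon>_sgn: "\<epsilon> * sgn (Re v) = 1" using \<epsilon> torus(4) by (auto simp: sgn_real_def)
  have "cmod p = \<bar>Re v\<bar>" "cmod q = \<bar>Im v\<bar>" using torus(2,3) by (simp_all add: p_def q_def norm_mult)
  then have "\<epsilon> * cmod p = Re v * (\<epsilon> * sgn (Re v))"
    "\<epsilon> * Re (\<eta>\<^sup>2) * cmod q = Im v * (\<epsilon> * sgn (Re v)) * (sgn (Im v) * sgn (Im v))"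
    by (simp_all add: abs_sgn sign(1)[symmetric] sgn_mult)
  moreover have "sgn (Im v) * sgn (Im v) = 1" using torus(5) by (simp add: sgn_real_def)
  ultimately have v: "\<epsilon> * cmod p = Re v" "\<epsilon> * Re (\<eta>\<^sup>2) * cmod q = Im v"
    using \<epsilon>_sgn by simp_all
  have "sgn p = sgn (Re v) * (u * w)"
    using torus(2,3) by (simp add: p_def sgn_mult sgn_of_real sgn_of_norm_1)
  then have "\<epsilon> * sgn p * cnj w = of_real (\<epsilon> * sgn (Re v)) * u * (cnj w * w)"
    by (simp add: algebra_simps)
  then have u: "\<epsilon> * sgn p * cnj w = u"
    using \<epsilon>_sgn cnj_mult_self_of_norm_1[OF torus(3)] by simp
  have PQ: "A2_P (Phi (u, v, w)) = p" "A2_Q (Phi (u, v, w)) = q"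
    using torus(1) by (simp_all add: Phi_torus_reg p_def q_def)
  show ?thesis
    unfolding fields sheet_section_def Let_def PQ sign(2) u v by simp
qed

lemma continuous_on_sheet_section:
  assumes "cmod \<rho> = 1"
  shows "continuous_on (target \<inter> PQ_halfplane (\<rho>\<^sup>2)) (sheet_section \<rho> \<epsilon> \<eta>)"
proof -
  let ?S = "target \<inter> PQ_halfplane (\<rho>\<^sup>2)"
  have nz: "\<forall>x\<in>?S. A2_P x \<noteq> 0" "\<forall>x\<in>?S. A2_Q x \<noteq> 0" "\<forall>x\<in>?S. A2_P x * A2_Q x \<noteq> 0"
    by (auto simp: A2_in_target_iff)
  have "Re (sgn (A2_P x * A2_Q x) * cnj (\<rho>\<^sup>2)) > 0" if "x \<in> ?S" for x
    using that by (intro Re_sgn_mult_pos) (simp add: PQ_halfplane_def)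
  then have "(\<lambda>x. sgn (A2_P x * A2_Q x) * cnj (\<rho>\<^sup>2)) ` ?S \<subseteq> - \<real>\<^sub>\<le>\<^sub>0"
    by (force simp: complex_nonpos_Reals_iff)
  then have "continuous_on ?S (\<lambda>x. csqrt (sgn (A2_P x * A2_Q x) * cnj (\<rho>\<^sup>2)))"
    by (intro continuous_on_compose2[OF continuous_on_csqrt] continuous_intros nz(3))
  then show ?thesis
    unfolding sheet_section_def Let_def Complex_eq by (intro continuous_intros nz(1))
qed

lemma openin_sheet: "openin (top_of_set torus_reg) (sheet \<rho> \<epsilon> \<eta>)"
proof -
  have "sheet \<rho> \<epsilon> \<eta> = torus_reg \<inter> Phi -` PQ_halfplane (\<rho>\<^sup>2) \<inter>
          ({z. 0 < \<epsilon> * Re (fst (snd z))} \<inter>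
           {z. \<bar>Im (snd (snd z) * inverse (\<eta> * \<rho>))\<bar> < Re (snd (snd z) * inverse (\<eta> * \<rho>))})"
    by (auto simp: sheet_def right_sector_def divide_inverse)
  also have "openin (top_of_set torus_reg) \<dots>"
    by (rule openin_Int_open[OF continuous_openin_preimage_gen[OF continuous_on_Phi open_PQ_halfplane]])
      (intro open_Int open_Collect_less continuous_intros)
  finally show ?thesis .
qed

lemma sheets_cover:
  assumes \<rho>: "cmod \<rho> = 1" and z: "z \<in> torus_reg" "Phi z \<in> PQ_halfplane (\<rho>\<^sup>2)"
  obtains \<epsilon> \<eta> where "(\<epsilon>, \<eta>) \<in> sheet_indices" "z \<in> sheet \<rho> \<epsilon> \<eta>"
proof (cases z)
  case (fields u v w)
  have torus: "(u, v, w) \<in> torus_reg" "cmod u = 1" "cmod w = 1" "Re v \<noteq> 0"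
    using z(1) by (auto simp: fields torus_reg_iff)
  have "(w / \<rho>)\<^sup>2 = w\<^sup>2 * cnj (\<rho>\<^sup>2)"
    using cnj_of_norm_1[OF \<rho>] by (simp add: power_divide field_simps)
  then have "sgn (Re v * (u * w) * (Im v * (cnj u * w))) * cnj (\<rho>\<^sup>2) = sgn (Re v * Im v) * (w / \<rho>)\<^sup>2"
    by (simp add: sgn_Phi_coords_product[OF torus(2,3)])
  moreover have "Re (sgn (Re v * (u * w) * (Im v * (cnj u * w))) * cnj (\<rho>\<^sup>2)) > 0"
    using z(2) by (intro Re_sgn_mult_pos) (simp add: fields PQ_halfplane_def Phi_torus_reg[OF torus(1)])
  ultimately have "Re ((w / \<rho>)\<^sup>2) \<noteq> 0" by auto
  then obtain \<eta> where \<eta>: "\<eta> \<in> quarter_turns" "(w / \<rho>) / \<eta> \<in> right_sector"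
    by (rule quarter_turn_to_right_sector_exists)
  have "sgn (Re v) * Re v > 0" "sgn (Re v) \<in> {1, -1}" using torus(4) by (auto simp: sgn_real_def)
  then show ?thesis
    using that[of "sgn (Re v)" \<eta>] z \<eta> by (simp add: fields sheet_indices_def sheet_def mult.commute)
qed

lemma sheet_index_unique:
  assumes "cmod \<rho> = 1" and idx: "(\<epsilon>, \<eta>) \<in> sheet_indices" "(\<epsilon>', \<eta>') \<in> sheet_indices"
    and z: "(u, v, w) \<in> sheet \<rho> \<epsilon> \<eta>" "(u, v, w) \<in> sheet \<rho> \<epsilon>' \<eta>'"
  shows "\<epsilon> = \<epsilon>'" "\<eta> = \<eta>'"
proof -
  show "\<epsilon> = \<epsilon>'"
    using idx z by (auto simp: sheet_indices_def sheet_def zero_less_mult_iff)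
  have "\<rho> \<noteq> 0" using assms by auto
  then have "(w / \<rho>) / \<eta> \<in> right_sector" "(w / \<rho>) / \<eta>' \<in> right_sector"
    using z by (simp_all add: sheet_def mult.commute)
  moreover have "\<eta> \<in> quarter_turns" "\<eta>' \<in> quarter_turns" using idx by (auto simp: sheet_indices_def)
  ultimately show "\<eta> = \<eta>'" by (intro quarter_turn_to_right_sector_unique[of \<eta> \<eta>' "w / \<rho>"])
qed

lemma Phi_sheeted_over:
  assumes \<rho>: "cmod \<rho> = 1"
  shows "sheeted_over torus_reg Phi (target \<inter> PQ_halfplane (\<rho>\<^sup>2)) sheet_indices
           (\<lambda>(\<epsilon>, \<eta>). sheet \<rho> \<epsilon> \<eta>) (\<lambda>(\<epsilon>, \<eta>). sheet_section \<rho> \<epsilon> \<eta>)"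
proof (rule sheeted_overI)
  show "torus_reg \<inter> Phi -` (target \<inter> PQ_halfplane (\<rho>\<^sup>2)) = (\<Union>k\<in>sheet_indices. case k of (\<epsilon>, \<eta>) \<Rightarrow> sheet \<rho> \<epsilon> \<eta>)"
  proof
    show "torus_reg \<inter> Phi -` (target \<inter> PQ_halfplane (\<rho>\<^sup>2)) \<subseteq> (\<Union>k\<in>sheet_indices. case k of (\<epsilon>, \<eta>) \<Rightarrow> sheet \<rho> \<epsilon> \<eta>)"
    proof
      fix z assume "z \<in> torus_reg \<inter> Phi -` (target \<inter> PQ_halfplane (\<rho>\<^sup>2))"
      then obtain \<epsilon> \<eta> where "(\<epsilon>, \<eta>) \<in> sheet_indices" "z \<in> sheet \<rho> \<epsilon> \<eta>"
        using sheets_cover[OF \<rho>] by blast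
      then show "z \<in> (\<Union>k\<in>sheet_indices. case k of (\<epsilon>, \<eta>) \<Rightarrow> sheet \<rho> \<epsilon> \<eta>)" by force
    qed
  qed (use sheetD Phi_in_target in fast)
  have "k = k'" if k: "k \<in> sheet_indices" "k' \<in> sheet_indices"
    and z: "z \<in> (case k of (\<epsilon>, \<eta>) \<Rightarrow> sheet \<rho> \<epsilon> \<eta>)" "z \<in> (case k' of (\<epsilon>, \<eta>) \<Rightarrow> sheet \<rho> \<epsilon> \<eta>)"
    for k k' z
  proof -
    obtain \<epsilon> \<eta> \<epsilon>' \<eta>' where "k = (\<epsilon>, \<eta>)" "k' = (\<epsilon>', \<eta>')" by force
    moreover obtain u v w where "z = (u, v, w)" by (cases z)
    ultimately show "k = k'" using sheet_index_unique[OF \<rho>] k z by simp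
  qed
  then show "disjoint_family_on (\<lambda>(\<epsilon>, \<eta>). sheet \<rho> \<epsilon> \<eta>) sheet_indices"
    unfolding disjoint_family_on_def by blast
qed (auto simp: sheet_indices_def openin_sheet continuous_on_sheet_section[OF \<rho>]
    sheet_section_right_inverse[OF \<rho>] sheet_section_left_inverse[OF \<rho>])

lemma Phi_locally_sheeted:
  assumes "a \<in> target"
  shows "\<exists>T V \<sigma>. a \<in> T \<and> openin (top_of_set target) T \<and> sheeted_over torus_reg Phi T sheet_indices V \<sigma>"
proof -
  define z where "z = A2_P a * A2_Q a"
  define \<rho> where "\<rho> = csqrt (sgn z)"
  have "z \<noteq> 0" using assms by (simp add: z_def A2_in_target_iff)
  then have "cmod (sgn z) = 1" by (simp add: norm_sgn)
  then have "cmod \<rho> = 1" by (simp add: \<rho>_def norm_power[symmetric])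
  have "z * cnj (\<rho>\<^sup>2) = (of_real (cmod z) * sgn z) * cnj (sgn z)" by (simp add: \<rho>_def)
  also have "\<dots> = of_real (cmod z) * (cnj (sgn z) * sgn z)" by (simp only: ac_simps)
  finally have "z * cnj (\<rho>\<^sup>2) = of_real (cmod z)" using cnj_sgn_mult_sgn[OF \<open>z \<noteq> 0\<close>] by simp
  then have "a \<in> PQ_halfplane (\<rho>\<^sup>2)"
    using \<open>z \<noteq> 0\<close> unfolding PQ_halfplane_def mem_Collect_eq z_def[symmetric] by simp
  then show ?thesis
    using Phi_sheeted_over[OF \<open>cmod \<rho> = 1\<close>] assms openin_open_Int[OF open_PQ_halfplane] by blast
qed

theorem proposition4p6:
  shows "covering_space torus_reg Phi target \<and>
         (\<forall>a \<in> target. card (torus_reg \<inter> Phi -` {a}) = 8)"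
proof -
  have "covering_space torus_reg Phi target"
    by (rule covering_space_if_locally_sheeted[OF continuous_on_Phi _ _ Phi_locally_sheeted])
      (auto simp: Phi_in_target sheet_indices_def quarter_turns_def)
  moreover have "card (torus_reg \<inter> Phi -` {a}) = 8" if "a \<in> target" for a
    using Phi_locally_sheeted[OF that] card_fibre_if_sheeted card_sheet_indices by metis
  ultimately show ?thesis by blast
qed

end
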